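(* Each arc component of $\mathbb G$ is dense in $\mathbb G$.
   Context: A graph is a pair $A=(V(A),E(A))$ with $E(A)\subseteq V(A)^2$ reflexive and symmetric; a topological graph additionally has $V$ compact, second countable, zero-dimensional and $E$ closed; subgraphs carry the induced edge relation. Epimorphisms are (continuous) edge-preserving maps surjective on vertices and edges. A vertex set $S$ is disconnected if it splits into two nonempty closed subsets with no edges between them; otherwise connected; components are maximal connected subsets. An epimorphism $f\colon A\to B$ is confluent if for every connected $Q\subseteq V(B)$ each component $C$ of $f^{-1}(Q)$ has $f(C)=Q$. $\mathbb G$ is the projective Fraïssé limit of the class of finite connected graphs with confluent epimorphisms: the unique topological graph such that (1) every finite connected graph is a confluent epimorphic image of $\mathbb G$; (2) for finite connected $A,B$ and confluent epimorphisms $f\colon\mathbb G\to A$, $g\colon B\to A$ there is a confluent epimorphism $h\colon\mathbb G\to B$ with $f=g\circ h$; (3) for each $\varepsilon>0$ some confluent epimorphism from $\mathbb G$ onto a finite connected graph has all point-preimages of diameter $<\varepsilon$. A topological graph $G$ is an arc if it is connected and there are at most two vertices $a,b$ such that for every $x\in V(G)\setminus\{a,b\}$ the graph $G\setminus\{x\}$ is not connected (a single vertex is an arc). The arc component of a vertex $p$ of $G$ is the union of all subgraphs of $G$ that are arcs and contain $p$. *)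

theory Defs
  imports "HOL-Analysis.Analysis"
begin

definition is_graph :: "'a set \<Rightarrow> ('a \<times> 'a) set \<Rightarrow> bool" where
  "is_graph V E \<longleftrightarrow> E \<subseteq> V \<times> V \<and> (\<forall>x\<in>V. (x, x) \<in> E) \<and> (\<forall>x y. (x, y) \<in> E \<longrightarrow> (y, x) \<in> E)"

definition topological_graph :: "'a topology \<Rightarrow> ('a \<times> 'a) set \<Rightarrow> bool" where
  "topological_graph T E \<longleftrightarrow> is_graph (topspace T) E \<and> compact_space T \<and> second_countable T
     \<and> T dim_le 0 \<and> closedin (prod_topology T T) E"

definition gconnected :: "'a topology \<Rightarrow> ('a \<times> 'a) set \<Rightarrow> 'a set \<Rightarrow> bool" where
  "gconnected T E S \<longleftrightarrow> \<not> (\<exists>P Q. P \<noteq> {} \<and> Q \<noteq> {} \<and> P \<union> Q = S \<and> P \<inter> Q = {}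
      \<and> closedin (subtopology T S) P \<and> closedin (subtopology T S) Q
      \<and> (\<forall>x\<in>P. \<forall>y\<in>Q. (x, y) \<notin> E))"

definition gcomponent :: "'a topology \<Rightarrow> ('a \<times> 'a) set \<Rightarrow> 'a set \<Rightarrow> 'a set \<Rightarrow> bool" where
  "gcomponent T E S C \<longleftrightarrow> C \<subseteq> S \<and> gconnected T E C
     \<and> (\<forall>D. C \<subseteq> D \<and> D \<subseteq> S \<and> gconnected T E D \<longrightarrow> D = C)"

definition epimorphism :: "'a topology \<Rightarrow> ('a \<times> 'a) set \<Rightarrow> 'b topology \<Rightarrow> ('b \<times> 'b) set
    \<Rightarrow> ('a \<Rightarrow> 'b) \<Rightarrow> bool" where
  "epimorphism T E T' E' f \<longleftrightarrow> continuous_map T T' f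
     \<and> (\<forall>x y. (x, y) \<in> E \<longrightarrow> (f x, f y) \<in> E')
     \<and> f ` topspace T = topspace T'
     \<and> (\<lambda>(x, y). (f x, f y)) ` E = E'"

definition confluent :: "'a topology \<Rightarrow> ('a \<times> 'a) set \<Rightarrow> 'b topology \<Rightarrow> ('b \<times> 'b) set
    \<Rightarrow> ('a \<Rightarrow> 'b) \<Rightarrow> bool" where
  "confluent T E T' E' f \<longleftrightarrow> epimorphism T E T' E' f
     \<and> (\<forall>Q. Q \<subseteq> topspace T' \<and> gconnected T' E' Q \<longrightarrow>
          (\<forall>C. gcomponent T E {x \<in> topspace T. f x \<in> Q} C \<longrightarrow> f ` C = Q))"

text \<open>Finite connected graphs (nonempty), with vertices taken w.l.o.g. in nat and the
  discrete topology.\<close>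
definition fin_conn_graph :: "nat set \<Rightarrow> (nat \<times> nat) set \<Rightarrow> bool" where
  "fin_conn_graph A EA \<longleftrightarrow> finite A \<and> A \<noteq> {} \<and> is_graph A EA
     \<and> gconnected (discrete_topology A) EA A"

text \<open>The characterizing properties (1)-(3) of the projective Fraisse limit G of finite
  connected graphs with confluent epimorphisms; V carries the subspace topology of a
  metric type (used for diameters).\<close>
definition is_fraisse_G :: "'a::metric_space set \<Rightarrow> ('a \<times> 'a) set \<Rightarrow> bool" where
  "is_fraisse_G V E \<longleftrightarrow> topological_graph (top_of_set V) E
   \<and> (\<forall>A EA. fin_conn_graph A EA \<longrightarrow>
        (\<exists>f. confluent (top_of_set V) E (discrete_topology A) EA f))
   \<and> (\<forall>A EA B EB f g. fin_conn_graph A EA \<and> fin_conn_graph B EB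
        \<and> confluent (top_of_set V) E (discrete_topology A) EA f
        \<and> confluent (discrete_topology B) EB (discrete_topology A) EA g
        \<longrightarrow> (\<exists>h. confluent (top_of_set V) E (discrete_topology B) EB h
                 \<and> (\<forall>x\<in>V. f x = g (h x))))
   \<and> (\<forall>\<epsilon>>0. \<exists>A EA f. fin_conn_graph A EA
        \<and> confluent (top_of_set V) E (discrete_topology A) EA f
        \<and> (\<forall>a\<in>A. diameter {x \<in> V. f x = a} < \<epsilon>))"

definition is_arc :: "'a topology \<Rightarrow> ('a \<times> 'a) set \<Rightarrow> 'a set \<Rightarrow> bool" where
  "is_arc T E S \<longleftrightarrow> S \<subseteq> topspace T \<and> closedin T S \<and> gconnected T E S
     \<and> (\<exists>a b. \<forall>x \<in> S - {a, b}. \<not> gconnected T E (S - {x}))"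

definition arc_component :: "'a topology \<Rightarrow> ('a \<times> 'a) set \<Rightarrow> 'a \<Rightarrow> 'a set" where
  "arc_component T E p = \<Union> {S. is_arc T E S \<and> p \<in> S}"

end

theory Submission
  imports Defs
begin

text \<open>
  Fix vertices \<open>p\<close> and \<open>q\<close> of \<open>G\<close>. Using the fine confluent quotients of \<open>G\<close> we build
  confluent maps \<open>f n\<close> onto finite connected graphs \<open>A n\<close>, with fibres of diameter
  below \<open>1 / (n + 1)\<close> and \<open>f n = g n \<circ> f (n + 1)\<close>, together with induced paths \<open>L n\<close> in
  \<open>A n\<close> starting at \<open>f n p\<close> such that \<open>g n\<close> maps \<open>L (n + 1)\<close> monotonically onto \<open>L n\<close>,
  and \<open>L 0\<close> ends at \<open>f 0 q\<close>. The path \<open>L (n + 1)\<close> is a shortest walk over \<open>L n\<close> that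
  advances along \<open>L n\<close> by at most one position per step. It can always advance because
  \<open>f n\<close> is confluent: the component of the preimage of an edge of \<open>L n\<close> through any point
  maps onto that edge.

  The points whose images lie on every \<open>L n\<close> form a compact connected set, linearly
  ordered by their positions on the paths, in which every point except \<open>p\<close> and a last
  point separates. It is therefore an arc through \<open>p\<close>, and it meets the fibre of \<open>f 0\<close>
  containing \<open>q\<close>, whose diameter can be chosen as small as we like.
\<close>

section \<open>Connected vertex sets\<close>

lemma gconnectedI:
  assumes "\<And>P Q. P \<union> Q = S \<Longrightarrow> P \<inter> Q = {} \<Longrightarrow> closedin (subtopology T S) P \<Longrightarrow>
    closedin (subtopology T S) Q \<Longrightarrow> \<forall>x\<in>P. \<forall>y\<in>Q. (x, y) \<notin> E \<Longrightarrow> P = {} \<or> Q = {}"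
  shows "gconnected T E S"
  using assms unfolding gconnected_def by blast

lemma gconnectedD:
  assumes "gconnected T E S" "P \<union> Q = S" "P \<inter> Q = {}" "closedin (subtopology T S) P"
    "closedin (subtopology T S) Q" "\<forall>x\<in>P. \<forall>y\<in>Q. (x, y) \<notin> E"
  shows "P = {} \<or> Q = {}"
  using assms unfolding gconnected_def by blast

lemma gconnected_singleton: "gconnected T E {x}"
proof (rule gconnectedI)
  fix P Q :: "'a set" assume "P \<union> Q = {x}" "P \<inter> Q = {}"
  then show "P = {} \<or> Q = {}"
    by (metis Int_absorb1 Int_absorb2 Un_upper1 Un_upper2 singleton_insert_inj_eq subset_singletonD)
qed

lemma gconnected_pair:
  assumes "(a, b) \<in> E" "(b, a) \<in> E"
  shows "gconnected T E {a, b}"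
proof (rule gconnectedI)
  fix P Q assume PQ: "P \<union> Q = {a, b}" "P \<inter> Q = {}" "\<forall>x\<in>P. \<forall>y\<in>Q. (x, y) \<notin> E"
  show "P = {} \<or> Q = {}"
  proof (rule ccontr)
    assume "\<not> (P = {} \<or> Q = {})"
    then obtain x y where "x \<in> P" "y \<in> Q" by blast
    moreover have "x \<noteq> y" using PQ(2) \<open>x \<in> P\<close> \<open>y \<in> Q\<close> by blast
    moreover have "x \<in> {a, b}" "y \<in> {a, b}" using PQ(1) \<open>x \<in> P\<close> \<open>y \<in> Q\<close> by blast+
    ultimately have "(x, y) \<in> E" using assms by auto
    then show False using PQ(3) \<open>x \<in> P\<close> \<open>y \<in> Q\<close> by blast
  qed
qed

lemma closedin_subtopology_shrink:
  assumes "closedin (subtopology T S) P" "D \<subseteq> S"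
  shows "closedin (subtopology T D) (P \<inter> D)"
proof -
  obtain C where "closedin T C" "P = C \<inter> S"
    using assms(1) closedin_subtopology by metis
  moreover have "C \<inter> S \<inter> D = C \<inter> D"
    using assms(2) by blast
  ultimately show ?thesis
    using closedin_subtopology by metis
qed

lemma gconnected_Union:
  assumes "\<And>D. D \<in> \<D> \<Longrightarrow> gconnected T E D" "\<And>D. D \<in> \<D> \<Longrightarrow> x \<in> D"
  shows "gconnected T E (\<Union>\<D>)"
proof (rule gconnectedI)
  fix P Q
  assume PQ: "P \<union> Q = \<Union>\<D>" "P \<inter> Q = {}"
    and cP: "closedin (subtopology T (\<Union>\<D>)) P" and cQ: "closedin (subtopology T (\<Union>\<D>)) Q"
    and no_edge: "\<forall>x\<in>P. \<forall>y\<in>Q. (x, y) \<notin> E"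
  have split: "P \<inter> D = {} \<or> Q \<inter> D = {}" if D: "D \<in> \<D>" for D
  proof (rule gconnectedD[OF assms(1)[OF D]])
    show "closedin (subtopology T D) (P \<inter> D)" "closedin (subtopology T D) (Q \<inter> D)"
      using closedin_subtopology_shrink[OF cP] closedin_subtopology_shrink[OF cQ] D by blast+
    show "P \<inter> D \<union> Q \<inter> D = D" "P \<inter> D \<inter> (Q \<inter> D) = {}"
      using PQ D by blast+
    show "\<forall>x\<in>P \<inter> D. \<forall>y\<in>Q \<inter> D. (x, y) \<notin> E"
      using no_edge by blast
  qed
  show "P = {} \<or> Q = {}"
  proof (cases "\<D> = {}")
    case True
    then show ?thesis using PQ by auto
  next
    case False
    then have "x \<in> P \<or> x \<in> Q"
      using PQ(1) assms(2) by blast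
    then show ?thesis
    proof
      assume "x \<in> P"
      then have "Q \<inter> D = {}" if "D \<in> \<D>" for D
        using split[OF that] assms(2)[OF that] by blast
      then show ?thesis using PQ by blast
    next
      assume "x \<in> Q"
      then have "P \<inter> D = {}" if "D \<in> \<D>" for D
        using split[OF that] assms(2)[OF that] by blast
      then show ?thesis using PQ by blast
    qed
  qed
qed

lemma gcomponent_exists:
  assumes "x \<in> S"
  obtains C where "gcomponent T E S C" "x \<in> C"
proof -
  define \<D> where "\<D> = {D. D \<subseteq> S \<and> x \<in> D \<and> gconnected T E D}"
  have "{x} \<in> \<D>"
    unfolding \<D>_def using assms gconnected_singleton by simp
  then have x: "x \<in> \<Union>\<D>"
    by blast
  have "gcomponent T E S (\<Union>\<D>)"
    unfolding gcomponent_def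
  proof (intro conjI allI impI)
    show "\<Union>\<D> \<subseteq> S"
      unfolding \<D>_def by blast
    show "gconnected T E (\<Union>\<D>)"
      by (rule gconnected_Union[where x = x]) (simp_all add: \<D>_def)
    fix D assume D: "\<Union>\<D> \<subseteq> D \<and> D \<subseteq> S \<and> gconnected T E D"
    with x have "x \<in> D"
      by blast
    with D have "D \<in> \<D>"
      unfolding \<D>_def by blast
    then show "D = \<Union>\<D>"
      using D by blast
  qed
  with x show ?thesis
    using that by blast
qed

section \<open>Maps onto finite discrete graphs\<close>

lemma closedin_discrete_preimage:
  assumes "continuous_map T (discrete_topology A) f"
  shows "closedin T {x \<in> topspace T. f x \<in> B}"
proof -
  have "{x \<in> topspace T. f x \<in> B} = {x \<in> topspace T. f x \<in> B \<inter> A}"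
    using continuous_map_image_subset_topspace[OF assms] by auto
  moreover have "closedin T {x \<in> topspace T. f x \<in> B \<inter> A}"
    by (rule closedin_continuous_map_preimage[OF assms]) simp
  ultimately show ?thesis
    by simp
qed

lemma openin_discrete_preimage:
  assumes "continuous_map T (discrete_topology A) f"
  shows "openin T {x \<in> topspace T. f x \<in> B}"
proof -
  have "{x \<in> topspace T. f x \<in> B} = {x \<in> topspace T. f x \<in> B \<inter> A}"
    using continuous_map_image_subset_topspace[OF assms] by auto
  moreover have "openin T {x \<in> topspace T. f x \<in> B \<inter> A}"
    by (rule openin_continuous_map_preimage[OF assms]) simp
  ultimately show ?thesis
    by simp
qed

lemma compact_decseq_Inter_nonempty:
  fixes K :: "nat \<Rightarrow> 'a::t2_space set"
  assumes "\<And>n. compact (K n)" "\<And>n. K n \<noteq> {}" "\<And>m n. m \<le> n \<Longrightarrow> K n \<subseteq> K m"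
  shows "\<Inter>(range K) \<noteq> {}"
proof -
  have "K 0 \<inter> (\<Inter>i\<in>UNIV. K i) \<noteq> {}"
  proof (rule compact_imp_fip_image[OF assms(1)])
    show "closed (K i)" for i
      using assms(1) compact_imp_closed by blast
    fix I :: "nat set" assume "finite I"
    then have "i \<le> Max (insert 0 I)" if "i \<in> insert 0 I" for i
      using that by simp
    then have "K (Max (insert 0 I)) \<subseteq> K 0 \<inter> (\<Inter>i\<in>I. K i)"
      using assms(3) by blast
    then show "K 0 \<inter> (\<Inter>i\<in>I. K i) \<noteq> {}"
      using assms(2) by blast
  qed
  then show ?thesis by blast
qed

lemma compact_sets_separated:
  fixes S T :: "'a::metric_space set"
  assumes "compact S" "compact T" "S \<inter> T = {}"
  obtains d where "d > 0" "\<And>x y. x \<in> S \<Longrightarrow> y \<in> T \<Longrightarrow> d \<le> dist x y"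
proof (cases "S = {} \<or> T = {}")
  case True
  then show ?thesis using that[of 1] by auto
next
  case False
  have "continuous_on (S \<times> T) (\<lambda>z. dist (fst z) (snd z))"
    by (intro continuous_intros)
  then obtain z where z: "z \<in> S \<times> T" "\<And>w. w \<in> S \<times> T \<Longrightarrow> dist (fst z) (snd z) \<le> dist (fst w) (snd w)"
    using continuous_attains_inf[OF compact_Times[OF assms(1,2)]] False by blast
  have "fst z \<noteq> snd z"
    using z(1) assms(3) by auto
  then show ?thesis
    using that[of "dist (fst z) (snd z)"] z(2) by force
qed

lemma continuous_map_discrete_uniformly_locally_constant:
  fixes V :: "'a::metric_space set"
  assumes "compact V" "continuous_map (top_of_set V) (discrete_topology A) f"
  obtains e where "e > 0" "\<And>x y. x \<in> V \<Longrightarrow> y \<in> V \<Longrightarrow> dist x y < e \<Longrightarrow> f x = f y"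
proof -
  define \<G> where "\<G> = {U. open U \<and> (\<exists>a. \<forall>x \<in> V \<inter> U. f x = a)}"
  have "V \<subseteq> \<Union>\<G>"
  proof
    fix x assume "x \<in> V"
    obtain U where "open U" "{y \<in> V. f y \<in> {f x}} = V \<inter> U"
      using openin_discrete_preimage[OF assms(2), of "{f x}"] unfolding openin_open by auto
    then show "x \<in> \<Union>\<G>"
      using \<open>x \<in> V\<close> unfolding \<G>_def by blast
  qed
  then obtain e where e: "e > 0" "\<And>x. x \<in> V \<Longrightarrow> \<exists>U \<in> \<G>. ball x e \<subseteq> U"
    using Heine_Borel_lemma[OF assms(1)] unfolding \<G>_def by blast
  have "f x = f y" if "x \<in> V" "y \<in> V" "dist x y < e" for x y
  proof -
    obtain U a where "ball x e \<subseteq> U" "\<forall>z \<in> V \<inter> U. f z = a"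
      using e(2)[OF \<open>x \<in> V\<close>] unfolding \<G>_def by blast
    then show ?thesis
      using that e(1) by (metis IntI centre_in_ball mem_ball subsetD)
  qed
  then show ?thesis using that e(1) by blast
qed

definition small_fibres :: "'a::metric_space set \<Rightarrow> ('a \<Rightarrow> 'b) \<Rightarrow> real \<Rightarrow> bool" where
  "small_fibres V f \<epsilon> \<longleftrightarrow> (\<forall>x\<in>V. \<forall>y\<in>V. f x = f y \<longrightarrow> dist x y < \<epsilon>)"

lemma small_fibres_mono: "small_fibres V f \<epsilon> \<Longrightarrow> \<epsilon> \<le> \<delta> \<Longrightarrow> small_fibres V f \<delta>"
  unfolding small_fibres_def using less_le_trans by blast

lemma small_fibres_if_diameter:
  assumes "compact V" "\<And>a. a \<in> f ` V \<Longrightarrow> diameter {x \<in> V. f x = a} < \<epsilon>"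
  shows "small_fibres V f \<epsilon>"
  unfolding small_fibres_def
proof (intro ballI impI)
  fix x y assume "x \<in> V" "y \<in> V" "f x = f y"
  have "bounded {z \<in> V. f z = f x}"
    by (rule bounded_subset[OF compact_imp_bounded[OF assms(1)]]) blast
  moreover have "x \<in> {z \<in> V. f z = f x}" "y \<in> {z \<in> V. f z = f x}"
    using \<open>x \<in> V\<close> \<open>y \<in> V\<close> \<open>f x = f y\<close> by simp_all
  ultimately have "dist x y \<le> diameter {z \<in> V. f z = f x}"
    by (rule diameter_bounded_bound)
  also have "\<dots> < \<epsilon>"
    using assms(2) \<open>x \<in> V\<close> by blast
  finally show "dist x y < \<epsilon>" .
qed

lemma small_fibres_factor:
  assumes F: "small_fibres V F e" and f: "\<And>x y. x \<in> V \<Longrightarrow> y \<in> V \<Longrightarrow> dist x y < e \<Longrightarrow> f x = f y"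
  obtains g where "\<And>x. x \<in> V \<Longrightarrow> f x = g (F x)"
proof
  fix x assume "x \<in> V"
  define y where "y = (SOME y. y \<in> V \<and> F y = F x)"
  have y: "y \<in> V \<and> F y = F x"
    unfolding y_def by (rule someI_ex) (use \<open>x \<in> V\<close> in blast)
  then have "dist x y < e"
    using F \<open>x \<in> V\<close> unfolding small_fibres_def by simp
  then show "f x = f (SOME y. y \<in> V \<and> F y = F x)"
    using f \<open>x \<in> V\<close> y unfolding y_def by blast
qed

lemma epimorphismD:
  assumes "epimorphism T E T' E' f"
  shows "continuous_map T T' f" "f ` topspace T = topspace T'"
    and "\<And>x y. (x, y) \<in> E \<Longrightarrow> (f x, f y) \<in> E'"
    and "\<And>a b. (a, b) \<in> E' \<Longrightarrow> \<exists>x y. (x, y) \<in> E \<and> f x = a \<and> f y = b"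
  using assms unfolding epimorphism_def by (auto simp: image_iff)

lemma confluent_component_onto:
  assumes "confluent T E T' E' f" "Q \<subseteq> topspace T'" "gconnected T' E' Q"
    "gcomponent T E {x \<in> topspace T. f x \<in> Q} C"
  shows "f ` C = Q"
  using assms unfolding confluent_def by blast

lemma topological_graph_compact:
  assumes "topological_graph (top_of_set V) E"
  shows "compact V"
  using assms unfolding topological_graph_def compact_space_def
  by (simp add: compactin_subtopology)

lemma topological_graph_compact_edges:
  assumes "topological_graph (top_of_set V) E"
  shows "compact E"
proof -
  have "closedin (top_of_set (V \<times> V)) E"
    using assms unfolding topological_graph_def by (simp add: subtopology_Times[symmetric])
  then show ?thesis
    using closedin_compact compact_Times topological_graph_compact[OF assms] by blast
qed

lemma is_fraisse_G_topological_graph: "is_fraisse_G V E \<Longrightarrow> topological_graph (top_of_set V) E"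
  unfolding is_fraisse_G_def by simp

lemma is_fraisse_G_small_fibres:
  assumes "is_fraisse_G V E" "\<epsilon> > 0"
  obtains A EA f where "fin_conn_graph A EA" "confluent (top_of_set V) E (discrete_topology A) EA f"
    "small_fibres V f \<epsilon>"
proof -
  have "\<forall>\<epsilon>>0. \<exists>A EA f. fin_conn_graph A EA \<and> confluent (top_of_set V) E (discrete_topology A) EA f
      \<and> (\<forall>a\<in>A. diameter {x \<in> V. f x = a} < \<epsilon>)"
    using assms(1) unfolding is_fraisse_G_def by (elim conjE)
  then obtain A EA f where f: "fin_conn_graph A EA" "confluent (top_of_set V) E (discrete_topology A) EA f"
    "\<forall>a\<in>A. diameter {x \<in> V. f x = a} < \<epsilon>"
    using assms(2) by blast
  have "epimorphism (top_of_set V) E (discrete_topology A) EA f"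
    using f(2) unfolding confluent_def by simp
  then have "f ` V = A"
    using epimorphismD(2) by fastforce
  moreover have "compact V"
    by (rule topological_graph_compact[OF is_fraisse_G_topological_graph[OF assms(1)]])
  ultimately have "small_fibres V f \<epsilon>"
    using f(3) by (intro small_fibres_if_diameter) auto
  then show ?thesis
    using that f(1,2) by simp
qed

section \<open>Climbing walks and induced paths\<close>

text \<open>\<open>list_index L y\<close> is unspecified unless \<open>y \<in> set L\<close> and \<open>L\<close> is distinct.\<close>

definition list_index :: "'b list \<Rightarrow> 'b \<Rightarrow> nat" where
  "list_index L y = (THE i. i < length L \<and> L ! i = y)"

lemma list_index_nth: "distinct L \<Longrightarrow> i < length L \<Longrightarrow> list_index L (L ! i) = i"
  unfolding list_index_def by (rule the_equality) (auto simp: nth_eq_iff_index_eq)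

lemma list_index_in_set:
  "distinct L \<Longrightarrow> y \<in> set L \<Longrightarrow> list_index L y < length L \<and> L ! list_index L y = y"
  by (metis list_index_nth in_set_conv_nth)

lemma index_set_boundary:
  assumes "i < n" "k < n" "i \<in> J" "k \<notin> J"
  obtains j where "Suc j < n" "j \<in> J \<longleftrightarrow> Suc j \<notin> J"
proof -
  have "\<exists>j. Suc j < n \<and> (j \<in> J \<longleftrightarrow> Suc j \<notin> J)"
  proof (rule ccontr)
    assume "\<not> ?thesis"
    then have step: "j \<in> J \<longleftrightarrow> Suc j \<in> J" if "Suc j < n" for j
      using that by blast
    have "j \<in> J \<longleftrightarrow> 0 \<in> J" if "j < n" for j
      using that by (induction j) (auto simp: step)
    then show False
      using assms by blast
  qed
  then show ?thesis
    using that by blast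
qed

definition induced_path :: "('b \<times> 'b) set \<Rightarrow> 'b list \<Rightarrow> bool" where
  "induced_path E L \<longleftrightarrow> L \<noteq> [] \<and> distinct L \<and>
     (\<forall>i j. i < length L \<longrightarrow> j < length L \<longrightarrow> ((L ! i, L ! j) \<in> E \<longleftrightarrow> i \<le> Suc j \<and> j \<le> Suc i))"

lemma induced_pathD:
  assumes "induced_path E L" "i < length L" "j < length L"
  shows "(L ! i, L ! j) \<in> E \<longleftrightarrow> i \<le> Suc j \<and> j \<le> Suc i"
  using assms unfolding induced_path_def by blast

lemma induced_path_hd_index: "induced_path E L \<Longrightarrow> list_index L (hd L) = 0"
  unfolding induced_path_def by (simp add: hd_conv_nth list_index_nth)

definition climbing_walk :: "('b \<times> 'b) set \<Rightarrow> 'b set \<Rightarrow> ('b \<Rightarrow> nat) \<Rightarrow> 'b list \<Rightarrow> bool" where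
  "climbing_walk E D \<rho> W \<longleftrightarrow> W \<noteq> [] \<and> set W \<subseteq> D \<and>
     (\<forall>i. Suc i < length W \<longrightarrow>
        (W ! i, W ! Suc i) \<in> E \<and> \<rho> (W ! i) \<le> \<rho> (W ! Suc i) \<and> \<rho> (W ! Suc i) \<le> Suc (\<rho> (W ! i)))"

lemma climbing_walkD:
  assumes "climbing_walk E D \<rho> W"
  shows "W \<noteq> []" "set W \<subseteq> D"
    and "\<And>i. Suc i < length W \<Longrightarrow> (W ! i, W ! Suc i) \<in> E"
    and "\<And>i. Suc i < length W \<Longrightarrow> \<rho> (W ! i) \<le> \<rho> (W ! Suc i) \<and> \<rho> (W ! Suc i) \<le> Suc (\<rho> (W ! i))"
  using assms unfolding climbing_walk_def by blast+

lemma climbing_walk_singleton: "v \<in> D \<Longrightarrow> climbing_walk E D \<rho> [v]"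
  unfolding climbing_walk_def by simp

lemma climbing_walk_snoc:
  assumes W: "climbing_walk E D \<rho> W"
    and z: "(last W, z) \<in> E" "z \<in> D" "\<rho> (last W) \<le> \<rho> z" "\<rho> z \<le> Suc (\<rho> (last W))"
  shows "climbing_walk E D \<rho> (W @ [z])"
proof -
  have "((W @ [z]) ! i, (W @ [z]) ! Suc i) \<in> E \<and> \<rho> ((W @ [z]) ! i) \<le> \<rho> ((W @ [z]) ! Suc i)
      \<and> \<rho> ((W @ [z]) ! Suc i) \<le> Suc (\<rho> ((W @ [z]) ! i))"
    if i: "Suc i < length (W @ [z])" for i
  proof (cases "Suc i < length W")
    case True
    then show ?thesis
      using climbing_walkD(3,4)[OF W True] by (simp add: nth_append)
  next
    case False
    then have "i = length W - 1" "Suc i = length W"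
      using i by simp_all
    then have "(W @ [z]) ! i = last W" "(W @ [z]) ! Suc i = z"
      using climbing_walkD(1)[OF W] by (simp_all add: nth_append last_conv_nth)
    then show ?thesis
      using z by simp
  qed
  then show ?thesis
    using climbing_walkD(1,2)[OF W] z(2) unfolding climbing_walk_def by simp
qed

lemma climbing_walk_mono:
  assumes "climbing_walk E D \<rho> W" "i \<le> j" "j < length W"
  shows "\<rho> (W ! i) \<le> \<rho> (W ! j)"
  using assms(2,3)
proof (induction j)
  case (Suc j)
  then show ?case
    using climbing_walkD(4)[OF assms(1), of j] by (cases "i = Suc j") auto
qed simp

lemma climbing_walk_reaches_levels:
  assumes "climbing_walk E D \<rho> W" "k < length W" "\<rho> (W ! 0) \<le> l" "l \<le> \<rho> (W ! k)"
  shows "\<exists>i\<le>k. \<rho> (W ! i) = l"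
  using assms(2,4)
proof (induction k)
  case 0
  then show ?case using assms(3) by auto
next
  case (Suc k)
  show ?case
  proof (cases "l \<le> \<rho> (W ! k)")
    case True
    then obtain i where "i \<le> k" "\<rho> (W ! i) = l"
      using Suc by auto
    then show ?thesis
      by (intro exI[of _ i]) simp
  next
    case False
    then show ?thesis
      using climbing_walkD(4)[OF assms(1), of k] Suc.prems by (intro exI[of _ "Suc k"]) auto
  qed
qed

lemma climbing_walk_take:
  assumes "climbing_walk E D \<rho> W" "k < length W"
  shows "climbing_walk E D \<rho> (take (Suc k) W)"
  using assms unfolding climbing_walk_def by (auto dest: in_set_takeD)

lemma climbing_walk_splice:
  assumes W: "climbing_walk E D \<rho> W" and ij: "i < j" "j < length W"
    and chord: "(W ! i, W ! j) \<in> E" "\<rho> (W ! j) \<le> Suc (\<rho> (W ! i))"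
  shows "climbing_walk E D \<rho> (take (Suc i) W @ drop j W)"
proof -
  let ?W = "take (Suc i) W @ drop j W"
  have nth: "?W ! k = (if k \<le> i then W ! k else W ! (j + (k - Suc i)))" if "k < length ?W" for k
    using that ij by (auto simp: nth_append min_def)
  have "(?W ! k, ?W ! Suc k) \<in> E \<and> \<rho> (?W ! k) \<le> \<rho> (?W ! Suc k) \<and> \<rho> (?W ! Suc k) \<le> Suc (\<rho> (?W ! k))"
    if k: "Suc k < length ?W" for k
  proof -
    consider "Suc k \<le> i" | "k = i" | "i < k"
      by linarith
    then show ?thesis
    proof cases
      case 1
      then show ?thesis
        using k nth[of k] nth[of "Suc k"] climbing_walkD(3,4)[OF W, of k] ij by simp
    next
      case 2
      then show ?thesis
        using k nth[of k] nth[of "Suc k"] chord climbing_walk_mono[OF W, of i j] ij by simp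
    next
      case 3
      have "Suc (j + (k - Suc i)) < length W" "j + (Suc k - Suc i) = Suc (j + (k - Suc i))"
        using k 3 ij by auto
      then show ?thesis
        using k nth[of k] nth[of "Suc k"] climbing_walkD(3,4)[OF W, of "j + (k - Suc i)"] 3 by simp
    qed
  qed
  moreover have "set ?W \<subseteq> D"
    using climbing_walkD(2)[OF W] set_take_subset set_drop_subset by fastforce
  ultimately show ?thesis
    unfolding climbing_walk_def using ij by simp
qed

definition level_step :: "('b \<times> 'b) set \<Rightarrow> 'b set \<Rightarrow> ('b \<Rightarrow> nat) \<Rightarrow> ('b \<times> 'b) set" where
  "level_step E D \<rho> = {(x, y). (x, y) \<in> E \<and> x \<in> D \<and> y \<in> D \<and> \<rho> y = \<rho> x}"

definition climbable :: "('b \<times> 'b) set \<Rightarrow> 'b set \<Rightarrow> ('b \<Rightarrow> nat) \<Rightarrow> 'b \<Rightarrow> bool" where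
  "climbable E D \<rho> u \<longleftrightarrow>
     (\<exists>w w'. (u, w) \<in> (level_step E D \<rho>)\<^sup>* \<and> w' \<in> D \<and> (w, w') \<in> E \<and> \<rho> w' = Suc (\<rho> w))"

lemma level_step_rtrancl:
  assumes "(u, w) \<in> (level_step E D \<rho>)\<^sup>*" "u \<in> D"
  shows "w \<in> D \<and> \<rho> w = \<rho> u"
  using assms by (induction rule: rtrancl_induct) (auto simp: level_step_def)

lemma climbing_walk_level_extend:
  assumes "(last W, w) \<in> (level_step E D \<rho>)\<^sup>*" "climbing_walk E D \<rho> W"
  shows "\<exists>W'. climbing_walk E D \<rho> W' \<and> hd W' = hd W \<and> last W' = w"
  using assms(1)
proof (induction rule: rtrancl_induct)
  case base
  then show ?case using assms(2) by blast
next
  case (step y z)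
  then obtain W' where W': "climbing_walk E D \<rho> W'" "hd W' = hd W" "last W' = y"
    by blast
  then have "climbing_walk E D \<rho> (W' @ [z])"
    using step(2) by (intro climbing_walk_snoc) (auto simp: level_step_def)
  then show ?case
    using W' climbing_walkD(1)[OF W'(1)] by (intro exI[of _ "W' @ [z]"]) simp
qed

lemma climbing_walk_exists:
  assumes "v \<in> D" "\<rho> v = 0" "\<And>u. u \<in> D \<Longrightarrow> \<rho> u < m \<Longrightarrow> climbable E D \<rho> u"
  shows "\<exists>W. climbing_walk E D \<rho> W \<and> hd W = v \<and> \<rho> (last W) = m"
proof -
  have "\<exists>W. climbing_walk E D \<rho> W \<and> hd W = v \<and> \<rho> (last W) = k" if "k \<le> m" for k
    using that
  proof (induction k)
    case 0
    then show ?case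
      using assms(1,2) climbing_walk_singleton by fastforce
  next
    case (Suc k)
    then obtain W where W: "climbing_walk E D \<rho> W" "hd W = v" "\<rho> (last W) = k"
      by auto
    have "last W \<in> D"
      using climbing_walkD(1,2)[OF W(1)] by auto
    then obtain w w' where ww: "(last W, w) \<in> (level_step E D \<rho>)\<^sup>*" "w' \<in> D" "(w, w') \<in> E"
      "\<rho> w' = Suc (\<rho> w)"
      using assms(3) W(3) Suc.prems unfolding climbable_def by fastforce
    obtain W' where W': "climbing_walk E D \<rho> W'" "hd W' = v" "last W' = w"
      using climbing_walk_level_extend[OF ww(1) W(1)] W(2) by blast
    have "\<rho> w = k"
      using level_step_rtrancl[OF ww(1) \<open>last W \<in> D\<close>] W(3) by simp
    then have "climbing_walk E D \<rho> (W' @ [w'])"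
      using W' ww by (intro climbing_walk_snoc) auto
    then show ?case
      using W' ww(4) \<open>\<rho> w = k\<close> climbing_walkD(1)[OF W'(1)] by (intro exI[of _ "W' @ [w']"]) simp
  qed
  then show ?thesis by blast
qed

context
  fixes E D \<rho> v m W
  assumes W: "climbing_walk E D \<rho> W" "hd W = v" "\<rho> (last W) = m"
    and shortest: "\<And>W'. climbing_walk E D \<rho> W' \<Longrightarrow> hd W' = v \<Longrightarrow> \<rho> (last W') = m \<Longrightarrow>
      length W \<le> length W'"
begin

lemma shortest_climbing_walk_no_shortcut:
  assumes "Suc i < j" "j < length W" "(W ! i, W ! j) \<in> E" "\<rho> (W ! j) \<le> Suc (\<rho> (W ! i))"
  shows False
proof -
  have "climbing_walk E D \<rho> (take (Suc i) W @ drop j W)"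
    using climbing_walk_splice[OF W(1) _ assms(2-4)] assms(1) by simp
  moreover have "hd (take (Suc i) W @ drop j W) = v" "\<rho> (last (take (Suc i) W @ drop j W)) = m"
    using W(2,3) assms(1,2) by (auto simp: hd_append)
  ultimately have "length W \<le> length (take (Suc i) W @ drop j W)"
    by (rule shortest)
  then show False
    using assms(1,2) by simp
qed

lemma shortest_climbing_walk_chordless:
  assumes adj: "\<And>x y. x \<in> D \<Longrightarrow> y \<in> D \<Longrightarrow> (x, y) \<in> E \<Longrightarrow> \<rho> y \<le> Suc (\<rho> x)"
    and ij: "i < j" "j < length W" "(W ! i, W ! j) \<in> E"
  shows "j = Suc i"
proof (rule ccontr)
  assume "j \<noteq> Suc i"
  moreover have "W ! i \<in> D" "W ! j \<in> D"
    using climbing_walkD(2)[OF W(1)] ij by auto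
  ultimately show False
    using shortest_climbing_walk_no_shortcut[of i j] adj ij by simp
qed

lemma shortest_climbing_walk_distinct: "distinct W"
proof -
  have False if ab: "a < b" "b < length W" "W ! a = W ! b" for a b
  proof (cases "Suc b < length W")
    case True
    then have "(W ! a, W ! Suc b) \<in> E" "\<rho> (W ! Suc b) \<le> Suc (\<rho> (W ! a))"
      using climbing_walkD(3,4)[OF W(1) True] ab(3) by simp_all
    then show False
      using shortest_climbing_walk_no_shortcut[of a "Suc b"] ab True by simp
  next
    case False
    then have "b = length W - 1"
      using ab by simp
    then have "last W = W ! a"
      using ab climbing_walkD(1)[OF W(1)] by (simp add: last_conv_nth)
    then have "\<rho> (last (take (Suc a) W)) = m"
      using W(3) ab by (simp add: take_Suc_conv_app_nth)
    moreover have "hd (take (Suc a) W) = v"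
      using W(2) ab by (simp add: hd_take)
    moreover have "climbing_walk E D \<rho> (take (Suc a) W)"
      using climbing_walk_take[OF W(1)] ab by simp
    ultimately have "length W \<le> length (take (Suc a) W)"
      using shortest by blast
    then show False
      using ab by simp
  qed
  then show ?thesis
    unfolding distinct_conv_nth by (metis linorder_neqE_nat)
qed

end

lemma chordless_walk_induced_path:
  assumes "is_graph A E" "climbing_walk E D \<rho> W" "D \<subseteq> A" "distinct W"
    and chordless: "\<And>i j. i < j \<Longrightarrow> j < length W \<Longrightarrow> (W ! i, W ! j) \<in> E \<Longrightarrow> j = Suc i"
  shows "induced_path E W"
proof -
  have refl: "(x, x) \<in> E" if "x \<in> set W" for x
    using assms(1-3) climbing_walkD(2)[OF assms(2)] that unfolding is_graph_def by blast
  have sym: "(y, x) \<in> E" if "(x, y) \<in> E" for x y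
    using assms(1) that unfolding is_graph_def by blast
  have "(W ! i, W ! j) \<in> E \<longleftrightarrow> i \<le> Suc j \<and> j \<le> Suc i"
    if ij: "i < length W" "j < length W" for i j
  proof (cases i j rule: linorder_cases)
    case less
    show ?thesis
    proof
      show "i \<le> Suc j \<and> j \<le> Suc i" if "(W ! i, W ! j) \<in> E"
        using chordless[OF less ij(2) that] by simp
      show "(W ! i, W ! j) \<in> E" if "i \<le> Suc j \<and> j \<le> Suc i"
        using climbing_walkD(3)[OF assms(2), of i] less that ij by (simp add: le_Suc_eq)
    qed
  next
    case equal
    then show ?thesis
      using refl ij by simp
  next
    case greater
    show ?thesis
    proof
      show "i \<le> Suc j \<and> j \<le> Suc i" if "(W ! i, W ! j) \<in> E"
        using chordless[OF greater ij(1) sym[OF that]] by simp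
      show "(W ! i, W ! j) \<in> E" if "i \<le> Suc j \<and> j \<le> Suc i"
        using climbing_walkD(3)[OF assms(2), of j] sym greater that ij by (simp add: le_Suc_eq)
    qed
  qed
  then show ?thesis
    unfolding induced_path_def using climbing_walkD(1)[OF assms(2)] assms(4) by blast
qed

lemma induced_climbing_path_exists:
  assumes "is_graph A E" "D \<subseteq> A" "v \<in> D" "\<rho> v = 0"
    and adj: "\<And>x y. x \<in> D \<Longrightarrow> y \<in> D \<Longrightarrow> (x, y) \<in> E \<Longrightarrow> \<rho> y \<le> Suc (\<rho> x)"
    and climb: "\<And>u. u \<in> D \<Longrightarrow> \<rho> u < m \<Longrightarrow> climbable E D \<rho> u"
  obtains W where "climbing_walk E D \<rho> W" "hd W = v" "\<rho> (last W) = m" "induced_path E W"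
proof -
  let ?P = "\<lambda>W. climbing_walk E D \<rho> W \<and> hd W = v \<and> \<rho> (last W) = m"
  obtain W0 where "?P W0"
    using climbing_walk_exists[OF assms(3,4) climb] by blast
  then obtain W where W: "?P W" and shortest: "\<And>W'. ?P W' \<Longrightarrow> length W \<le> length W'"
    using ex_has_least_nat[of ?P W0 length] by blast
  have "induced_path E W"
  proof (rule chordless_walk_induced_path[OF assms(1) _ assms(2)])
    show "climbing_walk E D \<rho> W" "distinct W"
      using W shortest_climbing_walk_distinct[of E D \<rho> W v m] shortest by blast+
    show "j = Suc i" if "i < j" "j < length W" "(W ! i, W ! j) \<in> E" for i j
      using shortest_climbing_walk_chordless[of E D \<rho> W v m, OF _ _ _ shortest adj that] W by blast
  qed
  then show ?thesis
    using that W by blast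
qed

lemma level_reach_closed_if_not_climbable:
  assumes "\<not> climbable E D \<rho> u" "u \<in> D" "(u, y) \<in> (level_step E D \<rho>)\<^sup>*"
    and "(y, w) \<in> E" "w \<in> D" "\<rho> u \<le> \<rho> w" "\<rho> w \<le> Suc (\<rho> u)"
  shows "(u, w) \<in> (level_step E D \<rho>)\<^sup>*"
proof -
  have y: "y \<in> D" "\<rho> y = \<rho> u"
    using level_step_rtrancl[OF assms(3,2)] by simp_all
  show ?thesis
  proof (cases "\<rho> w = \<rho> u")
    case True
    then have "(y, w) \<in> level_step E D \<rho>"
      using assms(4,5) y unfolding level_step_def by simp
    then show ?thesis
      using assms(3) by simp
  next
    case False
    then have "\<rho> w = Suc (\<rho> y)"
      using assms(6,7) y(2) by simp
    then have "climbable E D \<rho> u"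
      unfolding climbable_def using assms(3-5) by blast
    then show ?thesis
      using assms(1) by simp
  qed
qed

text \<open>Were \<open>F z\<close> not climbable, the points of \<open>Z\<close> over its level class and the remaining
  points would split \<open>Z\<close>.\<close>

lemma climbable_if_gconnected:
  assumes F: "continuous_map T (discrete_topology A) F"
    and edges: "\<And>x y. (x, y) \<in> ET \<Longrightarrow> (F x, F y) \<in> E"
    and Z: "gconnected T ET Z" "Z \<subseteq> topspace T"
    and levels: "\<And>w. w \<in> Z \<Longrightarrow> F w \<in> D \<and> (\<rho> (F w) = i \<or> \<rho> (F w) = Suc i)"
    and z: "z \<in> Z" "\<rho> (F z) = i" and z': "z' \<in> Z" "\<rho> (F z') = Suc i"
  shows "climbable E D \<rho> (F z)"
proof (rule ccontr)
  assume not_climbable: "\<not> climbable E D \<rho> (F z)"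
  define R where "R = {w. (F z, w) \<in> (level_step E D \<rho>)\<^sup>*}"
  have closed: "closedin (subtopology T Z) {x \<in> Z. F x \<in> B}" for B
  proof -
    have "{x \<in> Z. F x \<in> B} = {x \<in> topspace T. F x \<in> B} \<inter> Z"
      using Z(2) by blast
    then show ?thesis
      using closedin_discrete_preimage[OF F, of B] unfolding closedin_subtopology by blast
  qed
  have "(y, w) \<notin> ET" if y: "F y \<in> R" and w: "w \<in> Z" "F w \<notin> R" for y w
  proof
    assume "(y, w) \<in> ET"
    then have "(F z, F w) \<in> (level_step E D \<rho>)\<^sup>*"
      using level_reach_closed_if_not_climbable[OF not_climbable, of "F y" "F w"] edges
        levels[OF z(1)] levels[OF w(1)] z(2) y unfolding R_def by auto
    then show False
      using w(2) unfolding R_def by simp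
  qed
  then have "{x \<in> Z. F x \<in> R} = {} \<or> {x \<in> Z. F x \<in> -R} = {}"
    by (intro gconnectedD[OF Z(1) _ _ closed closed]) auto
  moreover have "F z \<in> R"
    unfolding R_def by simp
  moreover have "F z' \<notin> R"
    using level_step_rtrancl[of "F z" "F z'" E D \<rho>] levels[OF z(1)] z z'(2) unfolding R_def by auto
  ultimately show False
    using z(1) z'(1) by blast
qed

section \<open>Refining induced paths along finer confluent maps\<close>

lemma induced_path_start:
  assumes G: "is_fraisse_G V E" and "p \<in> V" "q \<in> V" "\<epsilon> > 0"
  obtains A :: "nat set" and EA f L where "confluent (top_of_set V) E (discrete_topology A) EA f"
    "small_fibres V f \<epsilon>" "set L \<subseteq> A" "induced_path EA L" "hd L = f p" "last L = f q"
proof -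
  obtain A EA f where f: "fin_conn_graph A EA" "confluent (top_of_set V) E (discrete_topology A) EA f"
    "small_fibres V f \<epsilon>"
    using is_fraisse_G_small_fibres[OF G \<open>\<epsilon> > 0\<close>] by blast
  have A: "is_graph A EA" "gconnected (discrete_topology A) EA A"
    using f(1) unfolding fin_conn_graph_def by simp_all
  have "f ` V = A"
    using epimorphismD(2) f(2) unfolding confluent_def by fastforce
  then have fpq: "f p \<in> A" "f q \<in> A"
    using assms(2,3) by blast+
  obtain L where "set L \<subseteq> A" "induced_path EA L" "hd L = f p" "last L = f q"
  proof (cases "f p = f q")
    case True
    have "(f p, f p) \<in> EA"
      using A(1) fpq unfolding is_graph_def by blast
    then have "induced_path EA [f p]"
      unfolding induced_path_def by simp
    then show ?thesis
      using that[of "[f p]"] fpq True by simp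
  next
    case False
    define \<rho> where "\<rho> w = (if w = f q then 1 else 0 :: nat)" for w
    have climb: "climbable EA A \<rho> u" if "u \<in> A" "\<rho> u < 1" for u
      using climbable_if_gconnected[OF continuous_map_id _ A(2), where z' = "f q" and i = 0 and z = u]
        that fpq by (auto simp: \<rho>_def)
    have "\<rho> (f p) = 0" "\<And>x y. \<rho> y \<le> Suc (\<rho> x)"
      using False by (simp_all add: \<rho>_def)
    then obtain W where W: "climbing_walk EA A \<rho> W" "hd W = f p" "\<rho> (last W) = 1" "induced_path EA W"
      using induced_climbing_path_exists[OF A(1) subset_refl fpq(1), of \<rho> 1] climb by blast
    then have "last W = f q"
      by (simp add: \<rho>_def split: if_splits)
    then show ?thesis
      using that W climbing_walkD(2)[OF W(1)] by blast
  qed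
  then show ?thesis
    using that f(2,3) by blast
qed

definition path_refinement :: "('b \<Rightarrow> 'c) \<Rightarrow> 'b list \<Rightarrow> 'c list \<Rightarrow> bool" where
  "path_refinement g W L \<longleftrightarrow> g ` set W = set L \<and>
     (\<forall>i j. i \<le> j \<longrightarrow> j < length W \<longrightarrow> list_index L (g (W ! i)) \<le> list_index L (g (W ! j)))"

lemma confluent_edge_component:
  assumes f: "confluent (top_of_set V) E (discrete_topology A) EA f"
    and ab: "(a, b) \<in> EA" "(b, a) \<in> EA" "a \<in> A" "b \<in> A" and x: "x \<in> V" "f x \<in> {a, b}"
  obtains C where "gconnected (top_of_set V) E C" "C \<subseteq> V" "x \<in> C" "f ` C = {a, b}"
proof -
  obtain C where C: "gcomponent (top_of_set V) E {y \<in> V. f y \<in> {a, b}} C" "x \<in> C"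
    using gcomponent_exists[of x "{y \<in> V. f y \<in> {a, b}}"] x by blast
  have "f ` C = {a, b}"
    using confluent_component_onto[OF f _ gconnected_pair[OF ab(1,2)]] ab(3,4) C(1) by simp
  moreover have "gconnected (top_of_set V) E C" "C \<subseteq> V"
    using C(1) unfolding gcomponent_def by auto
  ultimately show ?thesis
    using that C(2) by blast
qed

lemma confluent_factor_climbable:
  assumes f: "confluent (top_of_set V) E (discrete_topology A) EA f"
    and F: "epimorphism (top_of_set V) E (discrete_topology A') EA' F"
    and factor: "\<And>x. x \<in> V \<Longrightarrow> f x = g (F x)"
    and L: "induced_path EA L" "set L \<subseteq> A"
    and u: "u \<in> A'" "g u \<in> set L" "Suc (list_index L (g u)) < length L"
  shows "climbable EA' {w \<in> A'. g w \<in> set L} (\<lambda>w. list_index L (g w)) u"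
proof -
  define i where "i = list_index L (g u)"
  have dist: "distinct L"
    using L(1) unfolding induced_path_def by simp
  have i: "Suc i < length L" "L ! i = g u"
    using u list_index_in_set[OF dist] unfolding i_def by auto
  have edge: "(L ! i, L ! Suc i) \<in> EA" "(L ! Suc i, L ! i) \<in> EA" "L ! i \<in> A" "L ! Suc i \<in> A"
    using induced_pathD[OF L(1)] i(1) L(2) by auto
  obtain x where x: "x \<in> V" "F x = u"
    using epimorphismD(2)[OF F] u(1) by auto
  then have "f x \<in> {L ! i, L ! Suc i}"
    using factor i(2) by simp
  then obtain C where C: "gconnected (top_of_set V) E C" "C \<subseteq> V" "x \<in> C"
    "f ` C = {L ! i, L ! Suc i}"
    using confluent_edge_component[OF f edge x(1)] by blast
  then have "L ! Suc i \<in> f ` C"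
    by simp
  then obtain x' where x': "x' \<in> C" "f x' = L ! Suc i"
    by (auto elim!: imageE)
  have index: "list_index L (L ! i) = i" "list_index L (L ! Suc i) = Suc i"
    using list_index_nth[OF dist] i(1) by simp_all
  have levels: "F z \<in> {w \<in> A'. g w \<in> set L}
      \<and> (list_index L (g (F z)) = i \<or> list_index L (g (F z)) = Suc i)" if "z \<in> C" for z
  proof -
    have "F z \<in> A'"
      using epimorphismD(2)[OF F] C(2) that by auto
    have "f z \<in> {L ! i, L ! Suc i}" "z \<in> V"
      using C(2,4) that by auto
    then have "g (F z) \<in> {L ! i, L ! Suc i}"
      using factor[of z] by simp
    with \<open>F z \<in> A'\<close> show ?thesis
      using index i(1) by auto
  qed
  have "list_index L (g (F x')) = Suc i"
    using factor[of x'] x' C(2) index by auto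
  then have "climbable EA' {w \<in> A'. g w \<in> set L} (\<lambda>w. list_index L (g w)) (F x)"
    using climbable_if_gconnected[OF epimorphismD(1,3)[OF F] C(1) _ levels C(3) _ x'(1)] C(2) x(2)
    unfolding i_def by simp
  then show ?thesis
    using x(2) by simp
qed

lemma factor_index_adjacent:
  assumes F: "epimorphism (top_of_set V) E (discrete_topology A') EA' F"
    and f: "\<And>x y. (x, y) \<in> E \<Longrightarrow> (f x, f y) \<in> EA" and E: "E \<subseteq> V \<times> V"
    and factor: "\<And>x. x \<in> V \<Longrightarrow> f x = g (F x)"
    and L: "induced_path EA L" and ab: "(a, b) \<in> EA'" "g a \<in> set L" "g b \<in> set L"
  shows "list_index L (g b) \<le> Suc (list_index L (g a))"
proof -
  obtain x y where xy: "(x, y) \<in> E" "F x = a" "F y = b"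
    using epimorphismD(4)[OF F ab(1)] by blast
  have dist: "distinct L"
    using L unfolding induced_path_def by simp
  have "(g a, g b) \<in> EA"
    using f[OF xy(1)] factor xy E by auto
  moreover have "list_index L (g a) < length L" "L ! list_index L (g a) = g a"
    "list_index L (g b) < length L" "L ! list_index L (g b) = g b"
    using list_index_in_set[OF dist] ab(2,3) by simp_all
  ultimately show ?thesis
    using induced_pathD[OF L, of "list_index L (g a)" "list_index L (g b)"] by simp
qed

lemma climbing_walk_path_refinement:
  assumes W: "climbing_walk E D (\<lambda>w. list_index L (g w)) W" and D: "g ` D \<subseteq> set L"
    and L: "distinct L" "list_index L (g (hd W)) = 0" "list_index L (g (last W)) = length L - 1"
  shows "path_refinement g W L"
  unfolding path_refinement_def
proof (intro conjI allI impI subset_antisym)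
  have W_D: "set W \<subseteq> D" and W_ne: "W \<noteq> []"
    using climbing_walkD[OF W] by simp_all
  then show "g ` set W \<subseteq> set L"
    using D by blast
  show "set L \<subseteq> g ` set W"
  proof
    fix y assume "y \<in> set L"
    then obtain j where j: "j < length L" "y = L ! j"
      by (auto simp: in_set_conv_nth)
    have last: "length W - 1 < length W"
      using W_ne by simp
    moreover have "list_index L (g (W ! 0)) \<le> j" "j \<le> list_index L (g (W ! (length W - 1)))"
      using L(2,3) j(1) W_ne by (simp_all add: hd_conv_nth last_conv_nth)
    ultimately obtain i where i: "i \<le> length W - 1" "list_index L (g (W ! i)) = j"
      using climbing_walk_reaches_levels[OF W] by blast
    then have Wi: "W ! i \<in> set W"
      using last by simp
    then have "g (W ! i) \<in> set L"
      using D W_D by blast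
    then have "g (W ! i) = y"
      using list_index_in_set[OF L(1)] i(2) j(2) by metis
    then show "y \<in> g ` set W"
      using Wi by blast
  qed
  show "list_index L (g (W ! i)) \<le> list_index L (g (W ! j))" if "i \<le> j" "j < length W" for i j
    using climbing_walk_mono[OF W that] .
qed

lemma is_fraisse_G_refining_quotient:
  assumes G: "is_fraisse_G V E" and f: "continuous_map (top_of_set V) (discrete_topology A) f"
    and "\<epsilon> > 0"
  obtains A' :: "nat set" and EA' F g where "fin_conn_graph A' EA'"
    "confluent (top_of_set V) E (discrete_topology A') EA' F" "small_fibres V F \<epsilon>"
    "\<forall>x\<in>V. f x = g (F x)"
proof -
  have "compact V"
    using is_fraisse_G_topological_graph[OF G] by (rule topological_graph_compact)
  then obtain e where "e > 0" and f_loc: "\<And>x y. x \<in> V \<Longrightarrow> y \<in> V \<Longrightarrow> dist x y < e \<Longrightarrow> f x = f y"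
    using continuous_map_discrete_uniformly_locally_constant[OF _ f] by blast
  then have "min \<epsilon> e > 0"
    using \<open>\<epsilon> > 0\<close> by simp
  then obtain A' EA' F where F: "fin_conn_graph A' EA'"
    "confluent (top_of_set V) E (discrete_topology A') EA' F" "small_fibres V F (min \<epsilon> e)"
    using is_fraisse_G_small_fibres[OF G] by metis
  have "small_fibres V F e" "small_fibres V F \<epsilon>"
    using small_fibres_mono[OF F(3)] by simp_all
  moreover obtain g where "\<And>x. x \<in> V \<Longrightarrow> f x = g (F x)"
    using small_fibres_factor[where f = f, OF \<open>small_fibres V F e\<close> f_loc] by blast
  ultimately show ?thesis
    using that[of A' EA' F g] F(1,2) by blast
qed

lemma induced_path_refine:
  assumes G: "is_fraisse_G V E" and p: "p \<in> V"
    and f: "confluent (top_of_set V) E (discrete_topology A) EA f"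
    and L: "set L \<subseteq> A" "induced_path EA L" "hd L = f p" and "\<epsilon> > 0"
  obtains A' :: "nat set" and EA' F W g where "confluent (top_of_set V) E (discrete_topology A') EA' F"
    "small_fibres V F \<epsilon>" "set W \<subseteq> A'" "induced_path EA' W" "hd W = F p"
    "\<forall>x\<in>V. f x = g (F x)" "path_refinement g W L"
proof -
  have E: "E \<subseteq> V \<times> V"
    using is_fraisse_G_topological_graph[OF G] unfolding topological_graph_def is_graph_def by auto
  have f_epi: "epimorphism (top_of_set V) E (discrete_topology A) EA f"
    using f unfolding confluent_def by simp
  obtain A' :: "nat set" and EA' F g where F: "fin_conn_graph A' EA'"
    "confluent (top_of_set V) E (discrete_topology A') EA' F" "small_fibres V F \<epsilon>"
    and g: "\<forall>x\<in>V. f x = g (F x)"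
    using is_fraisse_G_refining_quotient[OF G epimorphismD(1)[OF f_epi] \<open>\<epsilon> > 0\<close>] by blast
  have F_epi: "epimorphism (top_of_set V) E (discrete_topology A') EA' F"
    using F(2) unfolding confluent_def by simp
  define D where "D = {w \<in> A'. g w \<in> set L}"
  define \<rho> where "\<rho> w = list_index L (g w)" for w
  have "hd L \<in> set L"
    using L(2) unfolding induced_path_def by simp
  moreover have "F p \<in> A'" "g (F p) = hd L"
    using epimorphismD(2)[OF F_epi] p L(3) g by auto
  ultimately have start: "F p \<in> D" "\<rho> (F p) = 0"
    using induced_path_hd_index[OF L(2)] unfolding D_def \<rho>_def by simp_all
  have adj: "\<rho> y \<le> Suc (\<rho> x)" if "x \<in> D" "y \<in> D" "(x, y) \<in> EA'" for x y
    using factor_index_adjacent[where f = f, OF F_epi epimorphismD(3)[OF f_epi] E _ L(2)] g that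
    unfolding D_def \<rho>_def by blast
  have climb: "climbable EA' D \<rho> u" if "u \<in> D" "\<rho> u < length L - 1" for u
    using confluent_factor_climbable[OF f F_epi _ L(2,1)] g that unfolding D_def \<rho>_def by simp
  have "is_graph A' EA'" "D \<subseteq> A'"
    using F(1) unfolding fin_conn_graph_def D_def by auto
  then obtain W where W: "climbing_walk EA' D \<rho> W" "hd W = F p" "\<rho> (last W) = length L - 1"
    "induced_path EA' W"
    using induced_climbing_path_exists[OF _ _ start adj climb] by blast
  have "path_refinement g W L"
    using climbing_walk_path_refinement[of EA' D L g W] W start(2) L(2)
    unfolding \<rho>_def D_def induced_path_def by auto
  moreover have "set W \<subseteq> A'"
    using climbing_walkD(2)[OF W(1)] unfolding D_def by blast
  ultimately show ?thesis
    using that[of A' EA' F W g] F(2,3) W(2,4) g by blast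
qed

section \<open>The arc of a tower of induced paths\<close>

locale path_tower =
  fixes V :: "'a::metric_space set" and E :: "('a \<times> 'a) set" and p :: 'a
    and A :: "nat \<Rightarrow> nat set" and EA :: "nat \<Rightarrow> (nat \<times> nat) set"
    and f :: "nat \<Rightarrow> 'a \<Rightarrow> nat" and g :: "nat \<Rightarrow> nat \<Rightarrow> nat" and L :: "nat \<Rightarrow> nat list"
  assumes graph: "topological_graph (top_of_set V) E"
    and epi: "\<And>n. epimorphism (top_of_set V) E (discrete_topology (A n)) (EA n) (f n)"
    and fine: "\<And>\<epsilon>. \<epsilon> > 0 \<Longrightarrow> \<exists>n. small_fibres V (f n) \<epsilon>"
    and path: "\<And>n. induced_path (EA n) (L n)" "\<And>n. set (L n) \<subseteq> A n"
    and start: "p \<in> V" "\<And>n. hd (L n) = f n p"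
    and factor: "\<And>n x. x \<in> V \<Longrightarrow> f n x = g n (f (Suc n) x)"
    and refine: "\<And>n. path_refinement (g n) (L (Suc n)) (L n)"
begin

definition limit_arc :: "'a set" where
  "limit_arc = {x \<in> V. \<forall>n. f n x \<in> set (L n)}"

definition pos :: "nat \<Rightarrow> 'a \<Rightarrow> nat" where
  "pos n x = list_index (L n) (f n x)"

definition before :: "'a \<Rightarrow> 'a \<Rightarrow> bool" where
  "before x y \<longleftrightarrow> (\<exists>n. pos n x < pos n y)"

lemma compact_V: "compact V"
  using graph by (rule topological_graph_compact)

lemma distinct_path: "distinct (L n)"
  using path(1) unfolding induced_path_def by simp

lemma limit_arc_subset: "limit_arc \<subseteq> V"
  unfolding limit_arc_def by blast

lemma closedin_on_path: "closedin (top_of_set V) {x \<in> V. f n x \<in> B}"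
  using closedin_discrete_preimage[OF epimorphismD(1)[OF epi]] by simp

lemma topological_graph_is_graph: "is_graph V E"
  using graph unfolding topological_graph_def by simp

lemma openin_on_path: "openin (top_of_set V) {x \<in> V. f n x \<in> B}"
  using openin_discrete_preimage[OF epimorphismD(1)[OF epi]] by simp

lemma compact_limit_arc: "compact limit_arc"
proof -
  have "limit_arc = (\<Inter>n. {x \<in> V. f n x \<in> set (L n)})"
    unfolding limit_arc_def by blast
  then have "closedin (top_of_set V) limit_arc"
    using closedin_on_path by (auto intro: closedin_Inter)
  then show ?thesis
    using closedin_compact compact_V by blast
qed

lemma pos_limit_arc: "x \<in> limit_arc \<Longrightarrow> pos n x < length (L n) \<and> L n ! pos n x = f n x"
  unfolding limit_arc_def pos_def using list_index_in_set[OF distinct_path] by blast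

lemma on_path_Suc: "x \<in> V \<Longrightarrow> f (Suc n) x \<in> set (L (Suc n)) \<Longrightarrow> f n x \<in> set (L n)"
  using factor[of x n] refine[of n] unfolding path_refinement_def by auto

lemma on_path_le:
  assumes "x \<in> V" "f m x \<in> set (L m)" "k \<le> m"
  shows "f k x \<in> set (L k)"
  using assms(3,2)
proof (induction rule: inc_induct)
  case (step k)
  then show ?case
    using on_path_Suc[OF assms(1)] by blast
qed

lemma p_in_limit_arc: "p \<in> limit_arc"
  and pos_p: "pos n p = 0"
proof -
  have "f n p \<in> set (L n)" for n
    using start(2)[of n] path(1)[of n] unfolding induced_path_def by (metis list.set_sel(1))
  then show "p \<in> limit_arc"
    unfolding limit_arc_def using start(1) by simp
  show "pos n p = 0"
    unfolding pos_def using start(2)[of n] induced_path_hd_index[OF path(1)] by metis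
qed

lemma pos_Suc_mono:
  assumes "x \<in> limit_arc" "y \<in> limit_arc" "pos (Suc n) x \<le> pos (Suc n) y"
  shows "pos n x \<le> pos n y"
proof -
  have "pos n z = list_index (L n) (g n (L (Suc n) ! pos (Suc n) z))" if "z \<in> limit_arc" for z
    using pos_limit_arc[OF that, of "Suc n"] factor[of z n] limit_arc_subset that unfolding pos_def by auto
  moreover have "pos (Suc n) z < length (L (Suc n))" if "z \<in> limit_arc" for z
    using pos_limit_arc[OF that] by blast
  ultimately show ?thesis
    using refine[of n] assms unfolding path_refinement_def by simp
qed

lemma pos_mono_le:
  assumes "x \<in> limit_arc" "y \<in> limit_arc" "k \<le> m" "pos m x \<le> pos m y"
  shows "pos k x \<le> pos k y"
  using assms(3,4)
proof (induction rule: inc_induct)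
  case (step k)
  then show ?case
    using pos_Suc_mono[OF assms(1,2)] by blast
qed

lemma pos_less_persists:
  assumes "x \<in> limit_arc" "y \<in> limit_arc" "pos n x < pos n y" "n \<le> m"
  shows "pos m x < pos m y"
  using pos_mono_le[OF assms(2,1,4)] assms(3) by linarith

lemma path_vertex_lifts:
  assumes "j < length (L n)"
  shows "\<exists>y \<in> set (L (n + k)). \<forall>x\<in>V. f (n + k) x = y \<longrightarrow> f n x = L n ! j"
proof (induction k)
  case 0
  then show ?case
    using assms by auto
next
  case (Suc k)
  then obtain y where y: "y \<in> set (L (n + k))" "\<forall>x\<in>V. f (n + k) x = y \<longrightarrow> f n x = L n ! j"
    by blast
  then obtain y' where "y' \<in> set (L (Suc (n + k)))" "g (n + k) y' = y"
    using refine[of "n + k"] unfolding path_refinement_def by (metis imageE)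
  then show ?case
    using y(2) factor[of _ "n + k"] by (intro bexI[of _ y']) auto
qed

lemma limit_arc_meets_fibre:
  assumes "j < length (L n)"
  shows "\<exists>x \<in> limit_arc. f n x = L n ! j"
proof -
  define K where "K i = {x \<in> V. f n x \<in> {L n ! j}} \<inter> {x \<in> V. f (n + i) x \<in> set (L (n + i))}" for i
  have K_compact: "compact (K i)" for i
  proof -
    have "closedin (top_of_set V) (K i)"
      unfolding K_def by (intro closedin_Int closedin_on_path)
    then show ?thesis
      using closedin_compact compact_V by blast
  qed
  have K_nonempty: "K i \<noteq> {}" for i
  proof -
    obtain y where y: "y \<in> set (L (n + i))" "\<forall>x\<in>V. f (n + i) x = y \<longrightarrow> f n x = L n ! j"
      using path_vertex_lifts[OF assms] by blast
    moreover have "y \<in> f (n + i) ` V"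
      using y(1) path(2) epimorphismD(2)[OF epi, of "n + i"] by auto
    ultimately show ?thesis
      unfolding K_def by auto
  qed
  have K_decreasing: "K i' \<subseteq> K i" if "i \<le> i'" for i i'
    unfolding K_def using on_path_le[of _ "n + i'" "n + i"] that by auto
  obtain x where "x \<in> \<Inter>(range K)"
    using compact_decseq_Inter_nonempty[OF K_compact K_nonempty K_decreasing] by (meson ex_in_conv)
  then have x: "x \<in> K i" for i
    by simp
  then have "x \<in> V" "f n x = L n ! j" "f n x \<in> set (L n)"
    using x[of 0] unfolding K_def by auto
  have "f m x \<in> set (L m)" for m
  proof (cases "n \<le> m")
    case True
    then show ?thesis
      using x[of "m - n"] unfolding K_def by simp
  next
    case False
    then show ?thesis
      using on_path_le[OF \<open>x \<in> V\<close> \<open>f n x \<in> set (L n)\<close>, of m] by simp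
  qed
  then show ?thesis
    using \<open>x \<in> V\<close> \<open>f n x = L n ! j\<close> unfolding limit_arc_def by blast
qed

lemma points_separated:
  assumes "x \<in> V" "y \<in> V" "x \<noteq> y"
  obtains n where "f n x \<noteq> f n y"
proof -
  have "dist x y > 0"
    using assms(3) by simp
  then obtain n where "small_fibres V (f n) (dist x y)"
    using fine by blast
  then show ?thesis
    using that assms unfolding small_fibres_def by blast
qed

lemma before_total:
  assumes "x \<in> limit_arc" "y \<in> limit_arc" "x \<noteq> y"
  shows "before x y \<or> before y x"
proof -
  obtain n where "f n x \<noteq> f n y"
    using points_separated assms limit_arc_subset by blast
  then have "pos n x \<noteq> pos n y"
    using pos_limit_arc[OF assms(1), of n] pos_limit_arc[OF assms(2), of n] by auto
  then show ?thesis
    unfolding before_def by (meson linorder_neqE_nat)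
qed

lemma before_asym:
  assumes "x \<in> limit_arc" "y \<in> limit_arc" "before x y"
  shows "\<not> before y x"
proof
  assume "before y x"
  then obtain m where m: "pos m y < pos m x"
    unfolding before_def by blast
  obtain n where n: "pos n x < pos n y"
    using assms(3) unfolding before_def by blast
  have "pos (max m n) x < pos (max m n) y"
    using pos_less_persists[OF assms(1,2) n] by simp
  moreover have "pos (max m n) y < pos (max m n) x"
    using pos_less_persists[OF assms(2,1) m] by simp
  ultimately show False
    by simp
qed



lemma openin_pos_condition:
  assumes "W \<subseteq> limit_arc"
  shows "openin (subtopology (top_of_set V) W) {y \<in> W. \<exists>n. R n (pos n y)}"
proof -
  define U where "U = (\<Union>n. {y \<in> V. f n y \<in> {L n ! i | i. i < length (L n) \<and> R n i}})"
  have "openin (top_of_set V) U"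
    unfolding U_def by (intro openin_Union; clarify; rule openin_on_path)
  moreover have "{y \<in> W. \<exists>n. R n (pos n y)} = U \<inter> W"
  proof (intro subset_antisym subsetI)
    fix y assume "y \<in> {y \<in> W. \<exists>n. R n (pos n y)}"
    then obtain n where "y \<in> W" "R n (pos n y)"
      by blast
    moreover have "y \<in> V" "pos n y < length (L n) \<and> L n ! pos n y = f n y"
      using pos_limit_arc limit_arc_subset assms \<open>y \<in> W\<close> by blast+
    ultimately show "y \<in> U \<inter> W"
      unfolding U_def by force
  next
    fix y assume "y \<in> U \<inter> W"
    then obtain n i where ni: "y \<in> W" "f n y = L n ! i" "i < length (L n)" "R n i"
      unfolding U_def by blast
    then have "pos n y = i"
      unfolding pos_def using list_index_nth[OF distinct_path] by simp
    then show "y \<in> {y \<in> W. \<exists>n. R n (pos n y)}"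
      using ni by blast
  qed
  ultimately show ?thesis
    unfolding openin_subtopology by blast
qed

lemma edge_not_across:
  assumes "x \<in> limit_arc" "y \<in> limit_arc" "w \<in> limit_arc" "before y x" "before x w"
  shows "(y, w) \<notin> E"
proof
  assume "(y, w) \<in> E"
  obtain n1 n2 where n: "pos n1 y < pos n1 x" "pos n2 x < pos n2 w"
    using assms(4,5) unfolding before_def by blast
  define N where "N = max n1 n2"
  have "pos N y < pos N x" "pos N x < pos N w"
    using pos_less_persists[OF assms(2,1) n(1)] pos_less_persists[OF assms(1,3) n(2)]
    unfolding N_def by simp_all
  moreover have "(L N ! pos N y, L N ! pos N w) \<in> EA N"
    using epimorphismD(3)[OF epi \<open>(y, w) \<in> E\<close>] pos_limit_arc assms(2,3) by simp
  then have "pos N w \<le> Suc (pos N y)"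
    using induced_pathD[OF path(1)] pos_limit_arc assms(2,3) by blast
  ultimately show False
    by simp
qed

lemma limit_arc_cut_point:
  assumes x: "x \<in> limit_arc" "x \<noteq> p" and z: "z \<in> limit_arc" "before x z"
  shows "\<not> gconnected (top_of_set V) E (limit_arc - {x})"
proof
  assume conn: "gconnected (top_of_set V) E (limit_arc - {x})"
  define P where "P = {y \<in> limit_arc - {x}. \<exists>n. pos n y < pos n x}"
  define Q where "Q = {y \<in> limit_arc - {x}. \<exists>n. pos n x < pos n y}"
  let ?T = "subtopology (top_of_set V) (limit_arc - {x})"
  have space: "topspace ?T = limit_arc - {x}"
    using limit_arc_subset by auto
  have cover: "P \<union> Q = limit_arc - {x}"
    unfolding P_def Q_def using before_total[OF _ x(1)] unfolding before_def by blast
  have disjoint: "P \<inter> Q = {}"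
    unfolding P_def Q_def using before_asym[OF _ x(1)] unfolding before_def by blast
  have "openin ?T P" "openin ?T Q"
    unfolding P_def Q_def by (rule openin_pos_condition, blast)+
  moreover have "topspace ?T - P = Q" "topspace ?T - Q = P"
    using space cover disjoint by blast+
  ultimately have closed: "closedin ?T P" "closedin ?T Q"
    unfolding closedin_def using space cover by auto
  have no_edge: "\<forall>y\<in>P. \<forall>w\<in>Q. (y, w) \<notin> E"
    using edge_not_across[OF x(1)] unfolding P_def Q_def before_def by blast
  obtain n where "f n p \<noteq> f n x"
    using points_separated start(1) x limit_arc_subset by blast
  then have "pos n p \<noteq> pos n x"
    using pos_limit_arc[OF p_in_limit_arc, of n] pos_limit_arc[OF x(1), of n] by auto
  then have "pos n p < pos n x"
    using pos_p by simp
  then have "p \<in> P"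
    unfolding P_def using p_in_limit_arc x(2) by blast
  moreover have "z \<in> Q"
    using z before_asym[OF x(1) x(1)] unfolding Q_def before_def by blast
  ultimately show False
    using gconnectedD[OF conn cover disjoint closed no_edge] by blast
qed

text \<open>If no fibre of \<open>f n\<close> meets both parts, two adjacent positions on \<open>L n\<close> have fibres
  meeting \<open>P\<close> and \<open>Q\<close> respectively, and the edge of \<open>A n\<close> between them lifts to \<open>E\<close>.\<close>

lemma limit_arc_parts_linked:
  assumes "P \<union> Q = limit_arc" "xP \<in> P" "xQ \<in> Q"
  shows "\<exists>x\<in>P. \<exists>y\<in>Q. \<exists>x' y'. (x', y') \<in> E \<and> f n x' = f n x \<and> f n y' = f n y"
proof (cases "\<exists>x\<in>P. \<exists>y\<in>Q. f n x = f n y")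
  case True
  then obtain x y where "x \<in> P" "y \<in> Q" "f n x = f n y"
    by blast
  moreover have "(y, y) \<in> E"
    using topological_graph_is_graph assms(1) \<open>y \<in> Q\<close> limit_arc_subset unfolding is_graph_def by blast
  ultimately have "(y, y) \<in> E \<and> f n y = f n x \<and> f n y = f n y"
    by simp
  then show ?thesis
    using \<open>x \<in> P\<close> \<open>y \<in> Q\<close> by blast
next
  case False
  define J where "J = {j. \<exists>x\<in>P. f n x = L n ! j}"
  have pos_xP: "pos n xP < length (L n)" "L n ! pos n xP = f n xP"
    and pos_xQ: "pos n xQ < length (L n)" "L n ! pos n xQ = f n xQ"
    using pos_limit_arc assms by blast+
  have "pos n xP \<in> J" "pos n xQ \<notin> J"
    using pos_xP(2) pos_xQ(2) assms(2,3) False unfolding J_def by force+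
  then obtain j where j: "Suc j < length (L n)" "j \<in> J \<longleftrightarrow> Suc j \<notin> J"
    using index_set_boundary[OF pos_xP(1) pos_xQ(1)] by blast
  obtain u w where uw: "u \<in> J" "w \<notin> J" "w < length (L n)" "(L n ! u, L n ! w) \<in> EA n"
  proof (cases "j \<in> J")
    case True
    then show ?thesis
      using that[of j "Suc j"] j induced_pathD[OF path(1)[of n], of j "Suc j"] by simp
  next
    case False
    then show ?thesis
      using that[of "Suc j" j] j induced_pathD[OF path(1)[of n], of "Suc j" j] by simp
  qed
  obtain x where "x \<in> P" "f n x = L n ! u"
    using uw(1) unfolding J_def by blast
  moreover obtain y where "y \<in> Q" "f n y = L n ! w"
    using limit_arc_meets_fibre[OF uw(3)] uw(2) assms(1) unfolding J_def by blast
  moreover obtain x' y' where "(x', y') \<in> E" "f n x' = L n ! u" "f n y' = L n ! w"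
    using epimorphismD(4)[OF epi uw(4)] by blast
  ultimately have "x \<in> P" "y \<in> Q" "(x', y') \<in> E \<and> f n x' = f n x \<and> f n y' = f n y"
    by simp_all
  then show ?thesis
    by blast
qed

lemma gconnected_limit_arc: "gconnected (top_of_set V) E limit_arc"
proof (rule gconnectedI)
  fix P Q
  assume PQ: "P \<union> Q = limit_arc" "P \<inter> Q = {}"
    and closed: "closedin (subtopology (top_of_set V) limit_arc) P"
      "closedin (subtopology (top_of_set V) limit_arc) Q"
    and no_edge: "\<forall>x\<in>P. \<forall>y\<in>Q. (x, y) \<notin> E"
  show "P = {} \<or> Q = {}"
  proof (rule ccontr)
    assume "\<not> (P = {} \<or> Q = {})"
    then obtain xP xQ where "xP \<in> P" "xQ \<in> Q"
      by blast
    have "subtopology (top_of_set V) limit_arc = top_of_set limit_arc"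
      using limit_arc_subset by (simp add: subtopology_subtopology Int_absorb1)
    then have "compact P" "compact Q"
      using closed closedin_compact[OF compact_limit_arc] by simp_all
    then have "compact (P \<times> Q)"
      by (rule compact_Times)
    moreover have "E \<inter> P \<times> Q = {}"
      using no_edge by blast
    ultimately obtain d where d: "d > 0" "\<And>e z. e \<in> E \<Longrightarrow> z \<in> P \<times> Q \<Longrightarrow> d \<le> dist e z"
      using compact_sets_separated[OF topological_graph_compact_edges[OF graph]] by blast
    then obtain n where n: "small_fibres V (f n) (d / 2)"
      using fine[of "d / 2"] by auto
    obtain x y x' y' where xy: "x \<in> P" "y \<in> Q" "(x', y') \<in> E" "f n x' = f n x" "f n y' = f n y"
      using limit_arc_parts_linked[OF PQ(1) \<open>xP \<in> P\<close> \<open>xQ \<in> Q\<close>] by blast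
    then have "x \<in> V" "y \<in> V" "x' \<in> V" "y' \<in> V"
      using PQ(1) limit_arc_subset topological_graph_is_graph unfolding is_graph_def by blast+
    then have "dist x' x < d / 2" "dist y' y < d / 2"
      using n xy(4,5) unfolding small_fibres_def by blast+
    then have "dist (x', y') (x, y) < d"
      unfolding dist_Pair_Pair by (intro sqrt_sum_squares_half_less) auto
    then show False
      using d(2)[OF xy(3), of "(x, y)"] xy(1,2) by simp
  qed
qed

lemma is_arc_limit_arc: "is_arc (top_of_set V) E limit_arc"
proof -
  have "\<exists>b. \<forall>x \<in> limit_arc - {p, b}. \<not> gconnected (top_of_set V) E (limit_arc - {x})"
  proof (cases "\<exists>b \<in> limit_arc. \<forall>z \<in> limit_arc. \<not> before b z")
    case True
    then obtain b where b: "b \<in> limit_arc" "\<And>z. z \<in> limit_arc \<Longrightarrow> \<not> before b z"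
      by blast
    have "\<exists>z \<in> limit_arc. before x z" if "x \<in> limit_arc - {p, b}" for x
    proof -
      have "before x b"
        using before_total[OF b(1), of x] b(2) that by auto
      then show ?thesis
        using b(1) by blast
    qed
    then show ?thesis
      using limit_arc_cut_point by blast
  next
    case False
    then show ?thesis
      using limit_arc_cut_point by blast
  qed
  moreover have "closedin (top_of_set V) limit_arc"
    using compact_limit_arc limit_arc_subset by (simp add: closed_subset compact_imp_closed)
  ultimately show ?thesis
    unfolding is_arc_def using limit_arc_subset gconnected_limit_arc by auto
qed

end

section \<open>Density of arc components\<close>

type_synonym 'a stage = "nat set \<times> (nat \<times> nat) set \<times> ('a \<Rightarrow> nat) \<times> nat list"

definition tower_stage :: "'a::metric_space set \<Rightarrow> ('a \<times> 'a) set \<Rightarrow> 'a \<Rightarrow> nat \<Rightarrow> 'a stage \<Rightarrow> bool" where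
  "tower_stage V E p n = (\<lambda>(A, EA, f, L). confluent (top_of_set V) E (discrete_topology A) EA f
     \<and> small_fibres V f (inverse (Suc n)) \<and> set L \<subseteq> A \<and> induced_path EA L \<and> hd L = f p)"

definition tower_refines :: "'a set \<Rightarrow> 'a stage \<Rightarrow> 'a stage \<Rightarrow> bool" where
  "tower_refines V = (\<lambda>(A, EA, f, L) (A', EA', f', L').
     \<exists>g. (\<forall>x\<in>V. f x = g (f' x)) \<and> path_refinement g L' L)"

lemma tower_stage_refine:
  assumes G: "is_fraisse_G V E" and p: "p \<in> V" and s: "tower_stage V E p n s"
  obtains s' where "tower_stage V E p (Suc n) s'" "tower_refines V s s'"
proof -
  obtain A EA f L where s_def: "s = (A, EA, f, L)"
    by (cases s) auto
  have st: "confluent (top_of_set V) E (discrete_topology A) EA f" "set L \<subseteq> A" "induced_path EA L"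
    "hd L = f p"
    using s unfolding tower_stage_def s_def by auto
  have eps: "inverse (real (Suc (Suc n))) > 0"
    by simp
  obtain A' :: "nat set" and EA' F W g where F: "confluent (top_of_set V) E (discrete_topology A') EA' F"
    "small_fibres V F (inverse (Suc (Suc n)))" "set W \<subseteq> A'" "induced_path EA' W" "hd W = F p"
    and g: "\<forall>x\<in>V. f x = g (F x)" "path_refinement g W L"
    by (rule induced_path_refine[OF G p st eps])
  have "tower_stage V E p (Suc n) (A', EA', F, W)"
    unfolding tower_stage_def using F by simp
  moreover have "tower_refines V s (A', EA', F, W)"
    unfolding tower_refines_def s_def using g by (auto intro!: exI[of _ g])
  ultimately show ?thesis
    using that by blast
qed

lemma path_tower_from_stages:
  assumes G: "is_fraisse_G V E" and p: "p \<in> V"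
    and stage: "\<And>n. tower_stage V E p n (A n, EA n, f n, L n)"
    and refines: "\<And>n. tower_refines V (A n, EA n, f n, L n) (A (Suc n), EA (Suc n), f (Suc n), L (Suc n))"
  obtains g where "path_tower V E p A EA f g L"
proof -
  have stage_n: "confluent (top_of_set V) E (discrete_topology (A n)) (EA n) (f n)"
    "small_fibres V (f n) (inverse (Suc n))" "set (L n) \<subseteq> A n" "induced_path (EA n) (L n)"
    "hd (L n) = f n p" for n
    using stage[of n] unfolding tower_stage_def by auto
  have g_exists: "\<forall>n. \<exists>g. (\<forall>x\<in>V. f n x = g (f (Suc n) x)) \<and> path_refinement g (L (Suc n)) (L n)"
    using refines unfolding tower_refines_def by simp
  obtain g where g: "\<And>n x. x \<in> V \<Longrightarrow> f n x = g n (f (Suc n) x)"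
    "\<And>n. path_refinement (g n) (L (Suc n)) (L n)"
    using choice[OF g_exists] by blast
  have "path_tower V E p A EA f g L"
  proof
    show "topological_graph (top_of_set V) E"
      using G by (rule is_fraisse_G_topological_graph)
    show "epimorphism (top_of_set V) E (discrete_topology (A n)) (EA n) (f n)" for n
      using stage_n(1) unfolding confluent_def by simp
    show "\<exists>n. small_fibres V (f n) \<epsilon>" if \<epsilon>: "\<epsilon> > 0" for \<epsilon>
    proof -
      obtain n where "inverse (real (Suc n)) < \<epsilon>"
        using reals_Archimedean[OF \<epsilon>] by blast
      then have "small_fibres V (f n) \<epsilon>"
        using small_fibres_mono[OF stage_n(2)] by simp
      then show ?thesis ..
    qed
    show "induced_path (EA n) (L n)" "set (L n) \<subseteq> A n" "hd (L n) = f n p" for n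
      using stage_n by simp_all
    show "x \<in> V \<Longrightarrow> f n x = g n (f (Suc n) x)" for n x
      by (rule g(1))
    show "path_refinement (g n) (L (Suc n)) (L n)" for n
      by (rule g(2))
  qed (rule p)
  then show ?thesis
    by (rule that)
qed

lemma tower_stages_exist:
  assumes G: "is_fraisse_G V E" and p: "p \<in> V" and start: "tower_stage V E p 0 s0"
  obtains A EA f L where "\<And>n. tower_stage V E p n (A n, EA n, f n, L n)"
    "\<And>n. tower_refines V (A n, EA n, f n, L n) (A (Suc n), EA (Suc n), f (Suc n), L (Suc n))"
    "(A 0, EA 0, f 0, L 0) = s0"
proof -
  have step: "\<exists>s'. tower_stage V E p (Suc n) s' \<and> tower_refines V s s'" if "tower_stage V E p n s" for n s
    using tower_stage_refine[OF G p that] by blast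
  have "\<exists>s. \<forall>n. (tower_stage V E p n (s n) \<and> (n = 0 \<longrightarrow> s n = s0)) \<and> tower_refines V (s n) (s (Suc n))"
  proof (rule dependent_nat_choice)
    show "\<exists>s. tower_stage V E p 0 s \<and> (0 = 0 \<longrightarrow> s = s0)"
      using start by blast
    show "\<exists>s'. (tower_stage V E p (Suc n) s' \<and> (Suc n = 0 \<longrightarrow> s' = s0)) \<and> tower_refines V s s'"
      if "tower_stage V E p n s \<and> (n = 0 \<longrightarrow> s = s0)" for s n
      using step that by simp
  qed
  then obtain s where s: "\<And>n. tower_stage V E p n (s n)" "\<And>n. tower_refines V (s n) (s (Suc n))"
    "s 0 = s0"
    by blast
  show ?thesis
    using that[of "\<lambda>n. fst (s n)" "\<lambda>n. fst (snd (s n))" "\<lambda>n. fst (snd (snd (s n)))"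
        "\<lambda>n. snd (snd (snd (s n)))"] s by simp
qed

lemma arc_component_approaches:
  assumes G: "is_fraisse_G V E" and p: "p \<in> V" and q: "q \<in> V" and "r > 0"
  shows "\<exists>x \<in> arc_component (top_of_set V) E p. dist x q < r"
proof -
  have "min r 1 > 0"
    using \<open>r > 0\<close> by simp
  then obtain A0 :: "nat set" and EA0 f0 L0 where s0: "confluent (top_of_set V) E (discrete_topology A0) EA0 f0"
    "small_fibres V f0 (min r 1)" "set L0 \<subseteq> A0" "induced_path EA0 L0" "hd L0 = f0 p" "last L0 = f0 q"
    by (rule induced_path_start[OF G p q])
  have start: "tower_stage V E p 0 (A0, EA0, f0, L0)"
    unfolding tower_stage_def using s0 small_fibres_mono[OF s0(2)] by simp
  obtain A EA f L where stages: "\<And>n. tower_stage V E p n (A n, EA n, f n, L n)"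
    "\<And>n. tower_refines V (A n, EA n, f n, L n) (A (Suc n), EA (Suc n), f (Suc n), L (Suc n))"
    and "(A 0, EA 0, f 0, L 0) = (A0, EA0, f0, L0)"
    using tower_stages_exist[OF G p start] by blast
  then have "f 0 = f0" "L 0 = L0"
    by simp_all
  obtain g where "path_tower V E p A EA f g L"
    using path_tower_from_stages[OF G p stages] by blast
  then interpret path_tower V E p A EA f g L .
  have "length (L 0) - 1 < length (L 0)"
    using path(1)[of 0] unfolding induced_path_def by simp
  then obtain x where x: "x \<in> limit_arc" "f 0 x = L 0 ! (length (L 0) - 1)"
    using limit_arc_meets_fibre by blast
  moreover have "L 0 ! (length (L 0) - 1) = last (L 0)"
    using path(1)[of 0] unfolding induced_path_def by (simp add: last_conv_nth)
  ultimately have "f0 x = f0 q" "x \<in> V"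
    using s0(6) \<open>f 0 = f0\<close> \<open>L 0 = L0\<close> limit_arc_subset by auto
  then have "dist x q < min r 1"
    using s0(2) q unfolding small_fibres_def by blast
  moreover have "x \<in> arc_component (top_of_set V) E p"
    unfolding arc_component_def using is_arc_limit_arc p_in_limit_arc x(1) by blast
  ultimately show ?thesis
    by auto
qed

theorem mainTheorem8:
  fixes V :: "'a::metric_space set" and E :: "('a \<times> 'a) set"
  assumes "is_fraisse_G V E"
  shows "\<forall>p \<in> V. (top_of_set V) closure_of (arc_component (top_of_set V) E p) = V"
proof
  fix p assume "p \<in> V"
  let ?X = "arc_component (top_of_set V) E p"
  have "?X \<subseteq> V"
    unfolding arc_component_def is_arc_def by auto
  moreover have "V \<subseteq> closure ?X"
    using arc_component_approaches[OF assms \<open>p \<in> V\<close>] by (auto simp: closure_approachable)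
  ultimately show "(top_of_set V) closure_of ?X = V"
    by (simp add: closure_of_subtopology Int_absorb1 Int_absorb2)
qed

end
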